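(* In the setting below, one of the following holds: (1) $\max_{g\in G_-}|\delta(g)| = E_k-\lfloor E_k\rfloor_2$; or (2) $\max_{g\in G_-}|\delta(g)|\ge E_k-\lfloor E_k\rfloor_2+2$.
   Context: Let $\Lambda_{24}\subset\mathbb{R}^{24}$ be the Leech lattice scaled so its minimal nonzero vectors have length $2$, and $\mathcal C$ the set of its $196560$ minimal vectors. Let $\mathrm{Co}_0$ be the finite group of linear isometries of $\mathbb{R}^{24}$ mapping $\Lambda_{24}$ onto itself; it acts (transitively) on $\mathcal C$. A set $X\subseteq\mathcal C$ is antipodal if $X=-X$. Fix an antipodal $S\subseteq\mathcal C$ with $\langle x,y\rangle\le1$ for distinct $x,y\in S$. Let $k\ge1$, $S_1=S$, $g_1=\mathrm{id}$, and for $2\le j\le k$ let $S_j=g_jS\setminus(S_1\cup\dots\cup S_{j-1})$ for some $g_j\in\mathrm{Co}_0$, where moreover $|S_j|\ge|S|\bigl(1-\sum_{i<j}|S_i|/|\mathcal C|\bigr)$. Put $U_k=S_1\cup\dots\cup S_k$ and $E_k=\mathbb{E}_{g}\,|gS\cap U_k|$ for $g$ uniformly random in $\mathrm{Co}_0$. For real $x$, $\lfloor x\rfloor_2$ is the greatest even integer $\le x$ and $\lceil x\rceil_2$ the least even integer $\ge x$. For $g\in\mathrm{Co}_0$ let $\delta(g)=|gS\cap U_k|-E_k$, and $G_+=\{g:\delta(g)>0\}$, $G_-=\{g:\delta(g)<0\}$. *)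

theory Defs
  imports "HOL-Analysis.Analysis" "HOL-Library.Numeral_Type"
begin

text \<open>Extended binary Golay code on coordinate positions 0..23: the GF(2)-span of the 12
  vectors obtained from the cyclic shifts (j = 0..11) of the generator polynomial
  1 + x^2 + x^4 + x^5 + x^6 + x^10 + x^11 of the [23,12,7] cyclic Golay code,
  each extended by the parity position 23. Codewords are represented as subsets of {0..23}.\<close>

definition golay_gen :: "nat \<Rightarrow> nat set" where
  "golay_gen j = (\<lambda>e. j + e) ` {0, 2, 4, 5, 6, 10, 11} \<union> {23}"

definition golay :: "nat set set" where
  "golay = {{i. i < 24 \<and> odd (card {j \<in> T. i \<in> golay_gen j})} | T. T \<subseteq> {..<12}}"

text \<open>Integer coordinates of (sqrt 8 times) Leech lattice vectors (Conway--Sloane).\<close>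

definition leech_coords :: "int^24 \<Rightarrow> bool" where
  "leech_coords x \<longleftrightarrow>
     ((\<forall>i. even (x $ i)) \<and> (\<Sum>i\<in>UNIV. x $ i) mod 8 = 0 \<and>
        {n. n < 24 \<and> x $ (of_nat n) mod 4 = 2} \<in> golay)
   \<or> ((\<forall>i. odd (x $ i)) \<and> (\<Sum>i\<in>UNIV. x $ i) mod 8 = 4 \<and>
        {n. n < 24 \<and> x $ (of_nat n) mod 4 = 3} \<in> golay)"

text \<open>The Leech lattice, scaled so that minimal nonzero vectors have length 2.\<close>

definition leech :: "(real^24) set" where
  "leech = {(\<chi> i. real_of_int (x $ i) / sqrt 8) | x. leech_coords x}"

definition leech_min :: "(real^24) set" where
  "leech_min = {v \<in> leech. norm v = 2}"

definition Co0 :: "(real^24 \<Rightarrow> real^24) set" where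
  "Co0 = {f. linear f \<and> (\<forall>x. norm (f x) = norm x) \<and> f ` leech = leech}"

definition floor2 :: "real \<Rightarrow> real" where
  "floor2 x = 2 * of_int \<lfloor>x / 2\<rfloor>"

end

theory Submission
  imports Defs
begin

text \<open>Every set \<open>gS \<inter> U\<close> is antipodal and avoids the origin, so it splits into pairs
  \<open>{x, -x}\<close> and has even cardinality. If some \<open>\<delta>(g)\<close> is negative, the most negative one
  comes from an even \<open>|gS \<inter> U| < E\<^sub>k\<close>, which is either \<open>\<lfloor>E\<^sub>k\<rfloor>\<^sub>2\<close> or at most \<open>\<lfloor>E\<^sub>k\<rfloor>\<^sub>2 - 2\<close>. If none
  is negative, all \<open>|gS \<inter> U|\<close> are at least their average \<open>E\<^sub>k\<close>, hence equal to it, so \<open>E\<^sub>k\<close> is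
  even and the maximum \<open>0\<close> equals \<open>E\<^sub>k - \<lfloor>E\<^sub>k\<rfloor>\<^sub>2\<close>.\<close>

definition antipodal :: "'a::ab_group_add set \<Rightarrow> bool" where
  "antipodal A \<longleftrightarrow> uminus ` A = A"

lemma antipodal_iff: "antipodal A \<longleftrightarrow> (\<forall>x\<in>A. - x \<in> A)"
  unfolding antipodal_def by (auto simp: image_iff) (metis minus_minus)

lemma antipodal_Int: "antipodal A \<Longrightarrow> antipodal B \<Longrightarrow> antipodal (A \<inter> B)"
  by (simp add: antipodal_iff)

lemma antipodal_Diff: "antipodal A \<Longrightarrow> antipodal B \<Longrightarrow> antipodal (A - B)"
  by (auto simp: antipodal_iff)

lemma antipodal_UN: "(\<And>i. i \<in> I \<Longrightarrow> antipodal (A i)) \<Longrightarrow> antipodal (\<Union>i\<in>I. A i)"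
  by (auto simp: antipodal_iff)

lemma antipodal_linear_image: "linear f \<Longrightarrow> antipodal A \<Longrightarrow> antipodal (f ` A)"
  by (auto simp: antipodal_iff) (metis image_eqI linear_neg)

lemma even_card_antipodal:
  fixes A :: "'a::real_vector set"
  assumes "antipodal A" and "0 \<notin> A"
  shows "even (card A)"
proof (cases "finite A")
  case fin: True
  define C where "C = (\<lambda>x. {x, - x}) ` A"
  have "\<Union>C = A"
    using assms(1) unfolding C_def antipodal_iff by auto
  moreover have "card c = 2" if "c \<in> C" for c
  proof -
    obtain x where x: "x \<in> A" "c = {x, - x}" using \<open>c \<in> C\<close> unfolding C_def by blast
    have "- x \<noteq> x"
    proof
      assume "- x = x"
      then have "2 *\<^sub>R x = 0" by (metis add.right_inverse scaleR_2)
      then show False using x(1) assms(2) by simp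
    qed
    then show ?thesis using x(2) by simp
  qed
  moreover have "c1 \<inter> c2 = {}" if c12: "c1 \<in> C" "c2 \<in> C" and "c1 \<noteq> c2" for c1 c2
  proof -
    obtain x y where c1: "c1 = {x, - x}" and c2: "c2 = {y, - y}"
      using c12 unfolding C_def by blast
    have "y \<noteq> x" "y \<noteq> - x" using \<open>c1 \<noteq> c2\<close> c1 c2 by auto
    then show ?thesis unfolding c1 c2 by (auto simp: minus_equation_iff)
  qed
  moreover have "finite C" unfolding C_def using fin by simp
  ultimately have "2 * card C = card A"
    using card_partition[of C 2] fin by simp
  then show ?thesis by (metis dvd_triv_left)
qed simp

lemma floor2_of_even: "even n \<Longrightarrow> floor2 (real n) = real n"
  unfolding floor2_def by (auto elim: evenE)

lemma even_below_floor2: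
  assumes "even n" and "real n < x"
  shows "real n = floor2 x \<or> real n + 2 \<le> floor2 x"
proof -
  obtain t where t: "n = 2 * t" using assms(1) by blast
  then have "int t \<le> \<lfloor>x / 2\<rfloor>" using assms(2) by linarith
  then consider "int t = \<lfloor>x / 2\<rfloor>" | "int t + 1 \<le> \<lfloor>x / 2\<rfloor>" by linarith
  then show ?thesis
  proof cases
    case 1
    then have "real t = of_int \<lfloor>x / 2\<rfloor>" by (metis of_int_of_nat_eq)
    then show ?thesis unfolding floor2_def t by simp
  next
    case 2
    then have "real t + 1 \<le> of_int \<lfloor>x / 2\<rfloor>" by linarith
    then show ?thesis unfolding floor2_def t by simp
  qed
qed

lemma ge_average_imp_eq_average:
  fixes f :: "'a \<Rightarrow> real"
  assumes "finite G" and "G \<noteq> {}" and "\<forall>h\<in>G. f h \<ge> (\<Sum>h\<in>G. f h) / card G" and "h \<in> G"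
  shows "f h = (\<Sum>h\<in>G. f h) / card G"
proof -
  let ?m = "(\<Sum>h\<in>G. f h) / card G"
  have "card G \<noteq> 0" using assms(1,2) by simp
  have "(\<Sum>h\<in>G. f h - ?m) = (\<Sum>h\<in>G. f h) - card G * ?m"
    by (simp only: sum_subtractf sum_constant)
  also have "\<dots> = 0"
    using \<open>card G \<noteq> 0\<close> by simp
  finally have "(\<Sum>h\<in>G. f h - ?m) = 0" .
  moreover have "\<forall>h\<in>G. 0 \<le> f h - ?m" using assms(3) by simp
  ultimately have "f h - ?m = 0"
    using sum_nonneg_eq_0_iff[OF assms(1), of "\<lambda>h. f h - ?m"] assms(4) by blast
  then show ?thesis by simp
qed

text \<open>No finiteness is assumed: for infinite \<open>G\<close> the average is \<open>0\<close> because \<open>card G = 0\<close>.\<close>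

lemma max_deficit_dichotomy:
  fixes c :: "'a \<Rightarrow> nat"
  assumes even: "\<forall>h\<in>G. even (c h)"
    and E: "E = (\<Sum>h\<in>G. real (c h)) / real (card G)"
  defines "M \<equiv> Max (insert 0 ((\<lambda>h. \<bar>real (c h) - E\<bar>) ` {h \<in> G. real (c h) - E < 0}))"
  shows "M = E - floor2 E \<or> M \<ge> E - floor2 E + 2"
proof (cases "\<exists>h\<in>G. real (c h) < E")
  case True
  then have fin: "finite G" using E by (cases "finite G") auto
  let ?D = "{h \<in> G. real (c h) - E < 0}"
  let ?A = "insert 0 ((\<lambda>h. \<bar>real (c h) - E\<bar>) ` ?D)"
  obtain h1 where h1: "h1 \<in> ?D" using True by auto
  have "\<bar>real (c h1) - E\<bar> \<le> M"
    unfolding M_def using fin h1 by (intro Max_ge) auto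
  then have "M \<noteq> 0" using h1 by auto
  moreover have "M \<in> ?A"
    unfolding M_def using fin by (intro Max_in) auto
  ultimately obtain h0 where h0: "h0 \<in> ?D" "M = E - real (c h0)" by auto
  then show ?thesis
    using even_below_floor2[of "c h0" E] even by auto
next
  case False
  then have ge: "\<forall>h\<in>G. E \<le> real (c h)" by (simp add: not_less)
  have "floor2 E = E"
  proof (cases "finite G \<and> G \<noteq> {}")
    case True
    then obtain h where h: "h \<in> G" by blast
    then have "real (c h) = E"
      using ge_average_imp_eq_average[of G "\<lambda>h. real (c h)" h] True ge unfolding E by blast
    then show ?thesis using floor2_of_even even h by metis
  next
    case False
    then have "E = 0" using E by auto
    then show ?thesis by (simp add: floor2_def)
  qed
  moreover have "{h \<in> G. real (c h) - E < 0} = {}"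
    using ge by auto
  then have "M = 0" unfolding M_def by (metis Max_singleton image_empty)
  ultimately show ?thesis by simp
qed

lemma antipodal_greedy_piece:
  fixes j k :: nat
  assumes "antipodal S" and "Sj 1 = S" and "\<forall>j\<in>{2..k}. linear (g j)"
    and "\<forall>j\<in>{2..k}. Sj j = g j ` S - (\<Union>i\<in>{1..<j}. Sj i)"
  shows "j \<in> {1..k} \<Longrightarrow> antipodal (Sj j)"
proof (induction j rule: less_induct)
  case (less j)
  show ?case
  proof (cases "j = 1")
    case True
    then show ?thesis using assms(1,2) by simp
  next
    case False
    then have j: "j \<in> {2..k}" using less.prems by auto
    have "antipodal (g j ` S)"
      using assms(1,3) j by (blast intro: antipodal_linear_image)
    moreover have "antipodal (\<Union>i\<in>{1..<j}. Sj i)"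
      using less.IH less.prems by (intro antipodal_UN) auto
    ultimately show ?thesis
      unfolding assms(4)[rule_format, OF j] by (rule antipodal_Diff)
  qed
qed

lemma Co0_linear: "h \<in> Co0 \<Longrightarrow> linear h"
  unfolding Co0_def by auto

lemma zero_notin_Co0_image_leech_min: "h \<in> Co0 \<Longrightarrow> 0 \<notin> h ` leech_min"
  unfolding Co0_def leech_min_def by auto (metis norm_zero zero_neq_numeral)

theorem lemma4p2:
  fixes S :: "(real^24) set" and k :: nat
    and g :: "nat \<Rightarrow> (real^24 \<Rightarrow> real^24)" and Sj :: "nat \<Rightarrow> (real^24) set"
    and U :: "(real^24) set" and E :: real and \<delta> :: "(real^24 \<Rightarrow> real^24) \<Rightarrow> real"
    and Gminus :: "(real^24 \<Rightarrow> real^24) set"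
  assumes S_sub: "S \<subseteq> leech_min"
    and S_antipodal: "uminus ` S = S"
    and S_inner: "\<forall>x\<in>S. \<forall>y\<in>S. x \<noteq> y \<longrightarrow> inner x y \<le> 1"
    and k_pos: "k \<ge> 1"
    and S1: "Sj 1 = S"
    and g1: "g 1 = id"
    and g_Co0: "\<forall>j\<in>{2..k}. g j \<in> Co0"
    and Sj_def: "\<forall>j\<in>{2..k}. Sj j = g j ` S - (\<Union>i\<in>{1..<j}. Sj i)"
    and Sj_large: "\<forall>j\<in>{2..k}. real (card (Sj j))
                     \<ge> real (card S) * (1 - (\<Sum>i\<in>{1..<j}. real (card (Sj i))) / real (card leech_min))"
    and U_def: "U = (\<Union>j\<in>{1..k}. Sj j)"
    and E_def: "E = (\<Sum>h\<in>Co0. real (card (h ` S \<inter> U))) / real (card Co0)"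
    and delta_def: "\<delta> = (\<lambda>h. real (card (h ` S \<inter> U)) - E)"
    and Gminus_def: "Gminus = {h \<in> Co0. \<delta> h < 0}"
  shows "Max (insert 0 ((\<lambda>h. \<bar>\<delta> h\<bar>) ` Gminus)) = E - floor2 E
       \<or> Max (insert 0 ((\<lambda>h. \<bar>\<delta> h\<bar>) ` Gminus)) \<ge> E - floor2 E + 2"
proof -
  have S: "antipodal S" using S_antipodal unfolding antipodal_def .
  have "\<forall>j\<in>{2..k}. linear (g j)" using g_Co0 Co0_linear by blast
  then have "antipodal U"
    unfolding U_def using antipodal_greedy_piece[OF S S1 _ Sj_def] by (intro antipodal_UN) blast
  have "\<forall>h\<in>Co0. even (card (h ` S \<inter> U))"
  proof (intro ballI even_card_antipodal)
    fix h assume h: "h \<in> Co0"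
    show "antipodal (h ` S \<inter> U)"
      by (rule antipodal_Int[OF antipodal_linear_image[OF Co0_linear[OF h] S] \<open>antipodal U\<close>])
    show "0 \<notin> h ` S \<inter> U"
      using zero_notin_Co0_image_leech_min[OF h] S_sub by blast
  qed
  then show ?thesis
    unfolding Gminus_def delta_def by (rule max_deficit_dichotomy[OF _ E_def])
qed

end
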